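(* Let $M$ be a $\mathrm{GF}(q)$-representable matroid, let $S$ and $T$ be disjoint subsets of $E(M)$ with $\kappa_M(S,T)=k$, and let $(A,B)$ be a partition of $E(M)$ with $S\subseteq A$, $T\subseteq B$ and $\lambda_M(A)=k$. Let $(C,D)$ be a partition of $E(M)-(S\cup T)$ such that $\lambda_{M/C\setminus D}(S)=k$. Then $(M^+_{(A,B)}/C\setminus D)|X=M^+_{(A,B)}|X$.
   Context: For a matroid $M$ with ground set $E$, $\lambda_M(X):=r_M(X)+r_M(E-X)-r(M)$, and for disjoint $S,T\subseteq E$, $\kappa_M(S,T):=\min\{\lambda_M(X):S\subseteq X\subseteq E-T\}$. Fix a representation of $M$ by an $r\times E$ matrix $D$ over $\mathrm{GF}(q)$, and for $Y\subseteq E$ let $\langle Y\rangle$ be the span of the columns of $D$ indexed by $Y$. If $\lambda_M(A)=k$ for a partition $(A,B)$ of $E$, then $\langle A\rangle\cap\langle B\rangle$ is a $k$-dimensional subspace of $\mathrm{GF}(q)^r$. The matroid $M^+_{(A,B)}$ is obtained from $M$ by adding a new set $X$ of $(q^k-1)/(q-1)$ elements, represented by vectors forming a copy of the projective geometry $\mathrm{PG}(k-1,q)$ inside $\langle A\rangle\cap\langle B\rangle$ (one vector from each 1-dimensional subspace of $\langle A\rangle\cap\langle B\rangle$); i.e. it is the matroid of the matrix $D$ extended by these columns. $|X$ denotes restriction to $X$. *)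

theory Defs
  imports "HOL-Analysis.Analysis"
begin

text \<open>A GF(q)-represented matroid: ground set E, column vectors given by
  Dm :: 'e => 'a^'r with 'a a finite field. Matroids are handled through their
  rank functions.\<close>

definition rk :: "('e \<Rightarrow> 'a::field ^ 'r) \<Rightarrow> 'e set \<Rightarrow> nat" where
  "rk Dm Y = vec.dim (Dm ` Y)"

definition conn :: "('e set \<Rightarrow> nat) \<Rightarrow> 'e set \<Rightarrow> 'e set \<Rightarrow> nat" where
  "conn r E Y = r Y + r (E - Y) - r E"

definition kappa :: "('e set \<Rightarrow> nat) \<Rightarrow> 'e set \<Rightarrow> 'e set \<Rightarrow> 'e set \<Rightarrow> nat" where
  "kappa r E S T = Min {conn r E Y | Y. S \<subseteq> Y \<and> Y \<subseteq> E - T}"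

text \<open>Rank function of the contraction by C (deletion only shrinks the ground set).\<close>
definition contr_rk :: "('e set \<Rightarrow> nat) \<Rightarrow> 'e set \<Rightarrow> 'e set \<Rightarrow> nat" where
  "contr_rk r C Y = r (Y \<union> C) - r C"

text \<open>The 1-dimensional subspaces of span(A) \<inter> span(B): index set of the new elements X.\<close>
definition pts :: "('e \<Rightarrow> 'a::field ^ 'r) \<Rightarrow> 'e set \<Rightarrow> 'e set \<Rightarrow> ('a ^ 'r) set set" where
  "pts Dm A B = {L. vec.subspace L \<and> vec.dim L = 1 \<and>
                   L \<subseteq> vec.span (Dm ` A) \<inter> vec.span (Dm ` B)}"

text \<open>Representation of M^+_(A,B): old elements Inl e, new elements Inr L, where
  L ranges over pts, represented by a nonzero vector of L.\<close>
definition ext_rep :: "('e \<Rightarrow> 'a::field ^ 'r) \<Rightarrow> ('e + ('a ^ 'r) set) \<Rightarrow> 'a ^ 'r" where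
  "ext_rep Dm x = (case x of Inl e \<Rightarrow> Dm e | Inr L \<Rightarrow> (SOME v. v \<in> L \<and> v \<noteq> 0))"

definition new_elems :: "('e \<Rightarrow> 'a::field ^ 'r) \<Rightarrow> 'e set \<Rightarrow> 'e set \<Rightarrow> ('e + ('a ^ 'r) set) set" where
  "new_elems Dm A B = Inr ` pts Dm A B"

end

theory Submission
  imports Defs
begin

text \<open>Everything follows from the modular law
  \<open>dim \<langle>U \<union> V\<rangle> + dim (\<langle>U\<rangle> \<inter> \<langle>V\<rangle>) = dim \<langle>U\<rangle> + dim \<langle>V\<rangle>\<close>.
  The two connectivity hypotheses say \<open>dim (\<langle>A\<rangle> \<inter> \<langle>B\<rangle>) = k\<close> and
  \<open>dim (\<langle>S \<union> C\<rangle> \<inter> \<langle>T \<union> C\<rangle>) = r(C) + k\<close>. Splitting \<open>C\<close> into \<open>C \<inter> A\<close> and \<open>C \<inter> B\<close>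
  and enlarging \<open>S \<union> C\<close> to \<open>A \<union> (C \<inter> B)\<close> and \<open>T \<union> C\<close> to \<open>B \<union> (C \<inter> A)\<close>, the modular law
  forces \<open>\<langle>A\<rangle> \<inter> \<langle>C \<inter> B\<rangle> = 0\<close> and \<open>\<langle>B\<rangle> \<inter> \<langle>C \<inter> A\<rangle> = 0\<close>, hence
  \<open>\<langle>A\<rangle> \<inter> \<langle>B\<rangle> \<inter> \<langle>C\<rangle> = 0\<close>. The new elements lie in \<open>\<langle>A\<rangle> \<inter> \<langle>B\<rangle>\<close>, so contracting \<open>C\<close>
  does not change the rank of any set of them.\<close>

lemma dim_Un_plus_dim_span_Int:
  fixes U V :: "('a::field ^ 'n) set"
  shows "vec.dim (U \<union> V) + vec.dim (vec.span U \<inter> vec.span V) = vec.dim U + vec.dim V"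
  using vec.dim_sums_Int[OF vec.subspace_span vec.subspace_span, of U V]
  by (simp add: vec.span_Un[symmetric])

lemma dim_span_Int_mono:
  fixes U V U' V' :: "('a::field ^ 'n) set"
  assumes "U \<subseteq> vec.span U'" "V \<subseteq> vec.span V'"
  shows "vec.dim (vec.span U \<inter> vec.span V) \<le> vec.dim (vec.span U' \<inter> vec.span V')"
  using assms by (intro vec.dim_subset Int_mono vec.span_minimal) auto

lemma dim_span_Int_crossed:
  fixes U V P Q :: "('a::field ^ 'n) set"
  assumes "P \<subseteq> U" "Q \<subseteq> V"
  shows "vec.dim (vec.span (U \<union> Q) \<inter> vec.span (V \<union> P))
           + vec.dim (vec.span U \<inter> vec.span Q) + vec.dim (vec.span P \<inter> vec.span V)
         = vec.dim (vec.span U \<inter> vec.span V) + vec.dim (P \<union> Q)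
           + vec.dim (vec.span P \<inter> vec.span Q)"
proof -
  have "vec.dim ((U \<union> Q) \<union> (V \<union> P)) = vec.dim (U \<union> V)"
    using assms by (metis Un_absorb1 Un_assoc Un_commute Un_left_commute)
  then show ?thesis
    using dim_Un_plus_dim_span_Int[of "U \<union> Q" "V \<union> P"]
      dim_Un_plus_dim_span_Int[of P V, unfolded Un_commute[of P V]]
      dim_Un_plus_dim_span_Int[of U Q]
      dim_Un_plus_dim_span_Int[of U V] dim_Un_plus_dim_span_Int[of P Q]
    by linarith
qed

lemma span_Int_span_Int_span_Un_trivial:
  fixes U V P Q :: "('a::field ^ 'n) set"
  assumes "P \<subseteq> U" "Q \<subseteq> V"
    and big: "vec.dim (vec.span U \<inter> vec.span V) + vec.dim (P \<union> Q)
                \<le> vec.dim (vec.span (U \<union> Q) \<inter> vec.span (V \<union> P))"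
  shows "vec.span U \<inter> vec.span V \<inter> vec.span (P \<union> Q) \<subseteq> {0}"
proof
  have "vec.dim (vec.span P \<inter> vec.span Q) \<le> vec.dim (vec.span U \<inter> vec.span Q)"
       "vec.dim (vec.span P \<inter> vec.span Q) \<le> vec.dim (vec.span P \<inter> vec.span V)"
    using assms(1,2) by (auto intro: dim_span_Int_mono vec.span_base)
  then have "vec.dim (vec.span U \<inter> vec.span Q) = 0" "vec.dim (vec.span P \<inter> vec.span V) = 0"
    using dim_span_Int_crossed[OF assms(1,2)] big by linarith+
  then have UQ: "vec.span U \<inter> vec.span Q \<subseteq> {0}" and PV: "vec.span P \<inter> vec.span V \<subseteq> {0}"
    by simp_all
  fix w assume w: "w \<in> vec.span U \<inter> vec.span V \<inter> vec.span (P \<union> Q)"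
  then obtain p q where pq: "w = p + q" "p \<in> vec.span P" "q \<in> vec.span Q"
    unfolding vec.span_Un by blast
  have "p \<in> vec.span U" using pq(2) assms(1) vec.span_mono by blast
  then have "q \<in> vec.span U" using w pq(1) vec.span_diff[of w U p] by simp
  then have "q = 0" using UQ pq(3) by blast
  moreover have "p \<in> vec.span V" using w pq(1) \<open>q = 0\<close> by simp
  then have "p = 0" using PV pq(2) by blast
  ultimately show "w \<in> {0}" using pq(1) by simp
qed

lemma rk_Un_plus_dim_span_Int:
  "rk Dm (X \<union> Y) + vec.dim (vec.span (Dm ` X) \<inter> vec.span (Dm ` Y)) = rk Dm X + rk Dm Y"
  unfolding rk_def image_Un by (rule dim_Un_plus_dim_span_Int)

lemma conn_rk_eq_dim_span_Int:
  assumes "A \<inter> B = {}"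
  shows "conn (rk Dm) (A \<union> B) A = vec.dim (vec.span (Dm ` A) \<inter> vec.span (Dm ` B))"
proof -
  have "A \<union> B - A = B" using assms by blast
  then show ?thesis
    unfolding conn_def using rk_Un_plus_dim_span_Int[of Dm A B] by simp
qed

lemma conn_contr_rk_plus_rk:
  assumes "S \<inter> T = {}"
  shows "conn (contr_rk (rk Dm) C) (S \<union> T) S + rk Dm C
           = vec.dim (vec.span (Dm ` (S \<union> C)) \<inter> vec.span (Dm ` (T \<union> C)))"
proof -
  have "vec.dim (vec.span (Dm ` C) \<inter> vec.span (Dm ` C))
          \<le> vec.dim (vec.span (Dm ` (S \<union> C)) \<inter> vec.span (Dm ` (T \<union> C)))"
    by (intro dim_span_Int_mono) (auto intro: vec.span_base)
  then have "rk Dm C \<le> vec.dim (vec.span (Dm ` (S \<union> C)) \<inter> vec.span (Dm ` (T \<union> C)))"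
    by (simp add: rk_def vec.dim_span)
  moreover have "rk Dm C \<le> rk Dm (S \<union> C)" "rk Dm C \<le> rk Dm (T \<union> C)"
    "rk Dm C \<le> rk Dm (S \<union> T \<union> C)"
    by (simp_all add: rk_def image_mono vec.dim_subset)
  moreover have "rk Dm (S \<union> T \<union> C) = rk Dm ((S \<union> C) \<union> (T \<union> C))"
    by (simp add: Un_ac)
  moreover have "S \<union> T - S = T" using assms by blast
  ultimately show ?thesis
    using rk_Un_plus_dim_span_Int[of Dm "S \<union> C" "T \<union> C"]
    unfolding conn_def contr_rk_def by (simp only:)
qed

lemma contr_rk_eq_rk_if_span_Int_trivial:
  assumes "vec.span (Dm ` Y) \<inter> vec.span (Dm ` C) \<subseteq> {0}"
  shows "contr_rk (rk Dm) C Y = rk Dm Y"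
proof -
  have "vec.dim (vec.span (Dm ` Y) \<inter> vec.span (Dm ` C)) = 0" using assms by simp
  then show ?thesis using rk_Un_plus_dim_span_Int[of Dm Y C] unfolding contr_rk_def by linarith
qed

lemma ext_rep_Inl_image: "ext_rep Dm ` Inl ` C = Dm ` C"
  by (simp add: ext_rep_def image_image)

lemma ext_rep_new_elems_subset:
  "ext_rep Dm ` new_elems Dm A B \<subseteq> vec.span (Dm ` A) \<inter> vec.span (Dm ` B)"
proof
  fix v assume "v \<in> ext_rep Dm ` new_elems Dm A B"
  then obtain L where L: "L \<in> pts Dm A B" "v = ext_rep Dm (Inr L)"
    unfolding new_elems_def by blast
  have "vec.dim L = 1" using L(1) unfolding pts_def by blast
  then have nonzero: "\<exists>v. v \<in> L \<and> v \<noteq> 0" by (metis vec.dim_eq_0 one_neq_zero subsetI singletonI)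
  have "v \<in> L" using someI_ex[OF nonzero] L(2) unfolding ext_rep_def by simp
  then show "v \<in> vec.span (Dm ` A) \<inter> vec.span (Dm ` B)" using L(1) unfolding pts_def by blast
qed

theorem lemma4p1:
  fixes Dm :: "'e \<Rightarrow> 'a::{field,finite} ^ 'r"
    and E S T A B C D :: "'e set" and k :: nat
  assumes "finite E"
    and "S \<subseteq> E" "T \<subseteq> E" "S \<inter> T = {}"
    and "kappa (rk Dm) E S T = k"
    and "A \<union> B = E" "A \<inter> B = {}" "S \<subseteq> A" "T \<subseteq> B"
    and "conn (rk Dm) E A = k"
    and "C \<union> D = E - (S \<union> T)" "C \<inter> D = {}"
    and "conn (contr_rk (rk Dm) C) (E - C - D) S = k"
  shows "\<forall>Y \<subseteq> new_elems Dm A B.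
           contr_rk (rk (ext_rep Dm)) (Inl ` C) Y = rk (ext_rep Dm) Y"
proof (intro allI impI)
  fix Y assume Y: "Y \<subseteq> new_elems Dm A B"
  let ?sp = "\<lambda>X. vec.span (Dm ` X)"
  have C: "C = (C \<inter> A) \<union> (C \<inter> B)" and "E - C - D = S \<union> T" using assms by blast+
  have "vec.dim (?sp A \<inter> ?sp B) + rk Dm C = vec.dim (?sp (S \<union> C) \<inter> ?sp (T \<union> C))"
    using assms conn_rk_eq_dim_span_Int[of A B Dm] conn_contr_rk_plus_rk[of S T Dm C]
    by (simp add: \<open>E - C - D = S \<union> T\<close>)
  also have "\<dots> \<le> vec.dim (vec.span (Dm ` A \<union> Dm ` (C \<inter> B)) \<inter> vec.span (Dm ` B \<union> Dm ` (C \<inter> A)))"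
  proof (intro dim_span_Int_mono order.trans[OF _ vec.span_superset])
    show "Dm ` (S \<union> C) \<subseteq> Dm ` A \<union> Dm ` (C \<inter> B)" "Dm ` (T \<union> C) \<subseteq> Dm ` B \<union> Dm ` (C \<inter> A)"
      using assms(8,9) C by blast+
  qed
  finally have "?sp A \<inter> ?sp B \<inter> vec.span (Dm ` (C \<inter> A) \<union> Dm ` (C \<inter> B)) \<subseteq> {0}"
    by (intro span_Int_span_Int_span_Un_trivial) (auto simp: rk_def C[symmetric] image_Un[symmetric])
  then have "?sp A \<inter> ?sp B \<inter> ?sp C \<subseteq> {0}"
    by (metis C image_Un)
  moreover have "vec.span (ext_rep Dm ` Y) \<subseteq> ?sp A \<inter> ?sp B"
    using ext_rep_new_elems_subset[of Dm A B] Y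
    by (intro vec.span_minimal vec.subspace_inter vec.subspace_span) auto
  ultimately show "contr_rk (rk (ext_rep Dm)) (Inl ` C) Y = rk (ext_rep Dm) Y"
    by (intro contr_rk_eq_rk_if_span_Int_trivial) (auto simp: ext_rep_Inl_image)
qed

end
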